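(* Let $\chi$ be a character of type $\langle l,m\rangle$ with standard expansion $$\chi=x_l\mathfrak{Z}_l+\sum_{1\le j\le m,\,p\nmid j}b_j\cdot p\,\mathfrak{Z}_j,\qquad x_l,b_j\in\{0,\dots,p-1\}.$$ Then $\chi$ is strictly equivalent to the character $$x_l\mathfrak{Z}_l+\sum_{\substack{m-l\le j\le m\\ p\nmid j}}b_j\cdot p\,\mathfrak{Z}_j,$$ with the same coefficients $x_l$ and $b_j$ ($m-l\le j\le m$, $p\nmid j$) as in $\chi$.
   Context: Let $p$ be a prime, $U_1=1+t\mathbb{F}_p[[t]]$, $U_j=1+t^j\mathbb{F}_p[[t]]$, with the $t$-adic topology. The Nottingham group $\mathcal{N}$ over $\mathbb{F}_p$ is the set of power series $u(t)=t(1+c_1t+\cdots)$, $c_i\in\mathbb{F}_p$, under composition. A character is a continuous homomorphism $\chi:U_1\to\mathbb{Z}/p^2\mathbb{Z}$; $\mathcal{N}$ acts by ${}_u\chi(f(t))=\chi(f(u(t)))$. Characters $\chi,\psi$ are strictly equivalent if $\psi={}_u\chi$ for some $u\in\mathcal{N}$ with $\chi(u(t)/t)=0$. A surjective character has type $\langle l,m\rangle$ where $l$ is the largest $b$ with $\chi(U_b)\not\subset p\mathbb{Z}/p^2\mathbb{Z}$ and $m$ the largest $b$ with $\chi(U_b)\ne0$. Put $E_j=1+t^j$; the $E_j$ with $p\nmid j$ form a topological $\mathbb{Z}_p$-basis of $U_1$, and for $p\nmid j$, $\mathfrak{Z}_j$ is the character with $\mathfrak{Z}_j(E_i)=\delta_{ij}$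 for $p\nmid i$ (so a character is determined by its values on the $E_i$, $p\nmid i$). *)

theory Defs
  imports "HOL-Analysis.Analysis" "HOL-Computational_Algebra.Formal_Power_Series"
begin

text \<open>The field F_p is modelled by a finite field type 'a with CARD('a) = p prime.
  Power series are 'a fps with the t-adic metric topology of the library.
  Z/p^2Z is modelled by the integers {0..<p^2} with addition mod p^2
  (the integers carry the discrete topology).\<close>

definition U1 :: "'a::field fps set" where
  "U1 = {f. fps_nth f 0 = 1}"

definition Uj :: "nat \<Rightarrow> 'a::field fps set" where
  "Uj j = {f. fps_nth f 0 = 1 \<and> (\<forall>i. 0 < i \<and> i < j \<longrightarrow> fps_nth f i = 0)}"

definition Ej :: "nat \<Rightarrow> 'a::field fps" where
  "Ej j = 1 + fps_X ^ j"

definition nottingham :: "'a::field fps set" where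
  "nottingham = {u. fps_nth u 0 = 0 \<and> fps_nth u 1 = 1}"

definition is_character :: "nat \<Rightarrow> ('a::field fps \<Rightarrow> int) \<Rightarrow> bool" where
  "is_character p chi \<longleftrightarrow>
     (\<forall>f\<in>U1. chi f \<in> {0..<int p ^ 2}) \<and>
     (\<forall>f\<in>U1. \<forall>g\<in>U1. chi (f * g) = (chi f + chi g) mod (int p ^ 2)) \<and>
     continuous_on U1 chi"

definition nott_act :: "'a::field fps \<Rightarrow> ('a fps \<Rightarrow> int) \<Rightarrow> ('a fps \<Rightarrow> int)" where
  "nott_act u chi = (\<lambda>f. chi (fps_compose f u))"

definition strictly_equivalent :: "('a::field fps \<Rightarrow> int) \<Rightarrow> ('a fps \<Rightarrow> int) \<Rightarrow> bool" where
  "strictly_equivalent chi psi \<longleftrightarrow>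
     (\<exists>u\<in>nottingham. chi (fps_shift 1 u) = 0 \<and> (\<forall>f\<in>U1. psi f = nott_act u chi f))"

definition has_type :: "nat \<Rightarrow> ('a::field fps \<Rightarrow> int) \<Rightarrow> nat \<Rightarrow> nat \<Rightarrow> bool" where
  "has_type p chi l m \<longleftrightarrow>
     is_character p chi \<and> chi ` U1 = {0..<int p ^ 2} \<and>
     (\<exists>f\<in>Uj l. \<not> int p dvd chi f) \<and> (\<forall>b>l. \<forall>f\<in>Uj b. int p dvd chi f) \<and>
     (\<exists>f\<in>Uj m. chi f \<noteq> 0) \<and> (\<forall>b>m. \<forall>f\<in>Uj b. chi f = 0)"

end

theory Submission
  imports Defs "HOL-Number_Theory.Number_Theory"
begin

unbundle no vec_syntax
unbundle fps_syntax

text \<open>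
  A character is determined by its values on the E_j with p not dividing j: it is locally
  constant, every f in U_1 agrees to any t-adic order with a finite product of powers of the
  E_j, and E_{jp} = E_j^p. A substitution t \<mapsto> t v with v in U_k leaves \<chi>(E_i) unchanged
  when k + i > m, and unchanged modulo p when k > l. For J < m - l with p not dividing J, take
  k = m - J and v = E_k^c E_m^c'. Then \<chi>(E_J(t v)) = \<chi>(E_J) + c J \<chi>(E_m) with
  \<chi>(E_m) = p \<mu> and p not dividing \<mu>, so c moves the digit b_J to any prescribed value,
  while c' is chosen to make \<chi>(v) = 0, which keeps the substitution strict. Doing this for
  J = m - l - 1 down to 1 removes all digits b_j with j < m - l.
\<close>

lemma fps_cutoff_eq_mono:
  "fps_cutoff n f = fps_cutoff n g \<Longrightarrow> k \<le> n \<Longrightarrow> fps_cutoff k f = fps_cutoff k g"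
  by (simp add: fps_cutoff_eq_fps_cutoff_iff)

lemma fps_cutoff_mult_cong:
  fixes f f' g g' :: "'a::comm_semiring_1 fps"
  assumes "fps_cutoff n f = fps_cutoff n f'" "fps_cutoff n g = fps_cutoff n g'"
  shows "fps_cutoff n (f * g) = fps_cutoff n (f' * g')"
  unfolding fps_cutoff_eq_fps_cutoff_iff
proof (intro allI impI)
  fix k assume "k < n"
  then have "(f * g) $ k = (fps_cutoff n f * fps_cutoff n g) $ k"
    by (simp add: fps_cutoff_left_mult_nth fps_cutoff_right_mult_nth)
  also have "\<dots> = (f' * g') $ k"
    using \<open>k < n\<close> assms by (simp add: fps_cutoff_left_mult_nth fps_cutoff_right_mult_nth)
  finally show "(f * g) $ k = (f' * g') $ k" .
qed

lemma fps_cutoff_compose_cong: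
  fixes f g :: "'a::comm_ring_1 fps"
  assumes "fps_cutoff n f = fps_cutoff n g"
  shows "fps_cutoff n (f oo w) = fps_cutoff n (g oo w)"
  using assms by (auto simp: fps_cutoff_eq_fps_cutoff_iff fps_compose_nth intro!: sum.cong)

lemma fps_cutoff_X_power_mult_cong:
  fixes f g :: "'a::comm_ring_1 fps"
  assumes "fps_cutoff n f = fps_cutoff n g"
  shows "fps_cutoff (n + j) (fps_X ^ j * f) = fps_cutoff (n + j) (fps_X ^ j * g)"
  using assms by (auto simp: fps_cutoff_eq_fps_cutoff_iff fps_X_power_mult_nth)

lemma fps_cutoff_add_X_power_mult:
  fixes f g :: "'a::comm_ring_1 fps"
  shows "n \<le> k \<Longrightarrow> fps_cutoff n (f + fps_X ^ k * g) = fps_cutoff n f"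
  by (auto simp: fps_cutoff_eq_fps_cutoff_iff fps_X_power_mult_nth)

lemma U1_iff: "f \<in> U1 \<longleftrightarrow> f $ 0 = 1"
  by (simp add: U1_def)

lemma Uj_iff_fps_cutoff: "f \<in> Uj n \<longleftrightarrow> f $ 0 = 1 \<and> fps_cutoff n f = fps_cutoff n 1"
  by (auto simp: Uj_def fps_cutoff_eq_fps_cutoff_iff)

lemma Uj_subset_U1: "Uj n \<subseteq> U1"
  by (auto simp: Uj_def U1_def)

lemma Uj_antimono: "k \<le> n \<Longrightarrow> Uj n \<subseteq> Uj k"
  by (auto simp: Uj_def)

lemma U1_eq_Uj_1: "U1 = Uj 1"
  by (auto simp: Uj_def U1_def)

lemma Uj_mult: "f \<in> Uj n \<Longrightarrow> g \<in> Uj n \<Longrightarrow> f * g \<in> Uj n"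
  using fps_cutoff_mult_cong[of n f 1 g 1] by (simp add: Uj_iff_fps_cutoff)

lemma Uj_power: "f \<in> Uj n \<Longrightarrow> f ^ k \<in> Uj n"
  by (induction k) (auto simp: Uj_mult, simp add: Uj_iff_fps_cutoff)

lemma U1_mult: "f \<in> U1 \<Longrightarrow> g \<in> U1 \<Longrightarrow> f * g \<in> U1"
  by (simp add: U1_iff)

lemma U1_power: "f \<in> U1 \<Longrightarrow> f ^ k \<in> U1"
  using Uj_power U1_eq_Uj_1 by blast

lemma U1_prod: "(\<And>s. s \<in> S \<Longrightarrow> F s \<in> U1) \<Longrightarrow> prod F S \<in> U1"
  by (induction S rule: infinite_finite_induct) (auto simp: U1_iff)

lemma Ej_in_Uj: "1 \<le> j \<Longrightarrow> (Ej j :: 'a::field fps) \<in> Uj j"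
  by (auto simp: Uj_def Ej_def)

lemma Ej_in_U1: "1 \<le> j \<Longrightarrow> (Ej j :: 'a::field fps) \<in> U1"
  using Ej_in_Uj Uj_subset_U1 by blast

lemma fps_compose_in_U1: "f \<in> U1 \<Longrightarrow> f oo w \<in> U1"
  by (simp add: U1_iff)

lemma fps_compose_in_Uj: "f \<in> Uj n \<Longrightarrow> f oo w \<in> Uj n"
  using fps_cutoff_compose_cong[of n f 1 w] by (simp add: Uj_iff_fps_cutoff)

lemma quotient_in_Uj_if_fps_cutoff_eq:
  assumes "f \<in> U1" "fps_cutoff n f = fps_cutoff n g" "g \<in> U1"
  shows "g * inverse f \<in> Uj n"
proof -
  have "f * inverse f = 1"
    using assms(1) by (simp add: U1_iff inverse_mult_eq_1')
  then show ?thesis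
    using fps_cutoff_mult_cong[OF assms(2)[symmetric] refl, of "inverse f"] assms
    by (simp add: Uj_iff_fps_cutoff U1_iff)
qed

text \<open>
  Continuity is dropped: the twisted maps \<open>f \<mapsto> \<chi>(f \<circ> u)\<close> are only used algebraically,
  and continuity is needed only for \<open>\<psi>\<close>.
\<close>

definition U1_hom :: "nat \<Rightarrow> ('a::field fps \<Rightarrow> int) \<Rightarrow> bool" where
  "U1_hom p \<phi> \<longleftrightarrow> (\<forall>f\<in>U1. \<phi> f \<in> {0..<int p ^ 2}) \<and>
     (\<forall>f\<in>U1. \<forall>g\<in>U1. \<phi> (f * g) = (\<phi> f + \<phi> g) mod int p ^ 2)"

lemma is_character_imp_U1_hom: "is_character p \<chi> \<Longrightarrow> U1_hom p \<chi>"
  by (simp add: is_character_def U1_hom_def)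

context
  fixes p :: nat and \<phi> :: "'a::field fps \<Rightarrow> int"
  assumes hom: "U1_hom p \<phi>"
begin

lemma U1_hom_range: "f \<in> U1 \<Longrightarrow> \<phi> f \<in> {0..<int p ^ 2}"
  using hom by (simp add: U1_hom_def)

lemma U1_hom_mult: "f \<in> U1 \<Longrightarrow> g \<in> U1 \<Longrightarrow> \<phi> (f * g) = (\<phi> f + \<phi> g) mod int p ^ 2"
  using hom by (simp add: U1_hom_def)

lemma U1_hom_one: "\<phi> 1 = 0"
proof -
  have one: "(1::'a fps) \<in> U1" by (simp add: U1_iff)
  then have "(\<phi> 1 + \<phi> 1) mod int p ^ 2 = \<phi> 1 + 0" "\<phi> 1 mod int p ^ 2 = \<phi> 1"
    using U1_hom_mult[OF one one] U1_hom_range[OF one] by simp_all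
  then have "[\<phi> 1 + \<phi> 1 = \<phi> 1 + 0] (mod int p ^ 2)"
    by (simp add: cong_def)
  then have "[\<phi> 1 = 0] (mod int p ^ 2)"
    by (rule cong_add_lcancel[THEN iffD1])
  then show ?thesis
    using \<open>\<phi> 1 mod int p ^ 2 = \<phi> 1\<close> by (simp add: cong_def)
qed

lemma U1_hom_power: "f \<in> U1 \<Longrightarrow> \<phi> (f ^ n) = int n * \<phi> f mod int p ^ 2"
proof (induction n)
  case 0
  then show ?case using U1_hom_one by simp
next
  case (Suc n)
  then have "\<phi> (f ^ Suc n) = (\<phi> f + int n * \<phi> f mod int p ^ 2) mod int p ^ 2"
    using U1_hom_mult[OF Suc.prems U1_power[OF Suc.prems]] by simp
  then show ?case by (simp add: mod_add_right_eq algebra_simps)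
qed

lemma U1_hom_prod:
  "finite S \<Longrightarrow> (\<And>s. s \<in> S \<Longrightarrow> F s \<in> U1) \<Longrightarrow> \<phi> (prod F S) = (\<Sum>s\<in>S. \<phi> (F s)) mod int p ^ 2"
proof (induction S rule: finite_induct)
  case empty
  then show ?case using U1_hom_one by simp
next
  case (insert s S)
  then have "\<phi> (prod F (insert s S)) = (\<phi> (F s) + (\<Sum>s\<in>S. \<phi> (F s)) mod int p ^ 2) mod int p ^ 2"
    using U1_hom_mult[of "F s" "prod F S"] U1_prod[of S F] by simp
  then show ?case
    using insert by (simp add: mod_add_right_eq)
qed

lemma U1_hom_cong_if_fps_cutoff_eq:
  assumes "\<forall>h\<in>Uj n. d dvd \<phi> h" "d dvd int p ^ 2"
    and "f \<in> U1" "g \<in> U1" "fps_cutoff n f = fps_cutoff n g"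
  shows "[\<phi> f = \<phi> g] (mod d)"
proof -
  define h where "h = g * inverse f"
  have h: "h \<in> Uj n" "g = f * h"
    using quotient_in_Uj_if_fps_cutoff_eq[OF assms(3,5,4)] assms(3)
    by (simp_all add: h_def U1_iff inverse_mult_eq_1' flip: mult.assoc)
  then have "\<phi> g = (\<phi> f + \<phi> h) mod int p ^ 2"
    using U1_hom_mult assms(3) Uj_subset_U1 by blast
  then have "[\<phi> g = \<phi> f + \<phi> h] (mod d)"
    using assms(2) by (simp add: cong_def mod_mod_cancel)
  moreover have "[\<phi> f + \<phi> h = \<phi> f + 0] (mod d)"
    using assms(1) h(1) by (intro cong_add cong_refl) (simp add: cong_0_iff)
  ultimately show ?thesis
    by (metis add.right_neutral cong_sym cong_trans)
qed

lemma U1_hom_eq_if_fps_cutoff_eq: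
  assumes "\<forall>h\<in>Uj n. \<phi> h = 0" "f \<in> U1" "g \<in> U1" "fps_cutoff n f = fps_cutoff n g"
  shows "\<phi> f = \<phi> g"
proof -
  have "[\<phi> f = \<phi> g] (mod int p ^ 2)"
    using U1_hom_cong_if_fps_cutoff_eq[of n "int p ^ 2"] assms by simp
  moreover have "\<phi> f mod int p ^ 2 = \<phi> f" "\<phi> g mod int p ^ 2 = \<phi> g"
    using U1_hom_range[OF assms(2)] U1_hom_range[OF assms(3)] by simp_all
  ultimately show ?thesis
    by (simp add: cong_def)
qed

end

lemma U1_hom_compose:
  fixes w :: "'a::field fps"
  assumes "U1_hom p \<phi>" "w $ 0 = 0"
  shows "U1_hom p (\<lambda>f. \<phi> (f oo w))"
  unfolding U1_hom_def
  using U1_hom_range[OF assms(1) fps_compose_in_U1] U1_hom_mult[OF assms(1) fps_compose_in_U1 fps_compose_in_U1]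
  by (simp add: fps_compose_mult_distrib[OF assms(2)])

lemma CHAR_eq_prime_card:
  assumes "prime p" "CARD('a::{field,finite}) = p"
  shows "CHAR('a) = p"
proof -
  have "prime CHAR('a)"
    by (rule prime_CHAR_semidom[OF finite_imp_CHAR_pos]) simp
  moreover have "CHAR('a) dvd p"
    using CHAR_dvd_CARD[where 'a='a] assms(2) by simp
  ultimately show ?thesis
    using assms(1) by (simp add: primes_dvd_imp_eq)
qed

lemma range_of_nat_prime_card:
  assumes "prime p" "CARD('a::{field,finite}) = p"
  shows "range (of_nat :: nat \<Rightarrow> 'a) = UNIV"
proof -
  have "inj_on (of_nat :: nat \<Rightarrow> 'a) {..<p}"
    using CHAR_eq_prime_card[OF assms]
    by (intro inj_onI) (simp add: of_nat_eq_iff_cong_CHAR cong_def)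
  then have "card ((of_nat :: nat \<Rightarrow> 'a) ` {..<p}) = CARD('a)"
    by (simp add: card_image assms(2))
  then have "(of_nat :: nat \<Rightarrow> 'a) ` {..<p} = UNIV"
    by (intro card_subset_eq) simp_all
  then show ?thesis
    by blast
qed

lemma Ej_power_prime_card:
  assumes "prime p" "CARD('a::{field,finite}) = p"
  shows "(Ej n :: 'a fps) ^ p = Ej (n * p)"
proof -
  have "CHAR('a fps) = p"
    using CHAR_eq_prime_card[OF assms] by simp
  then have "(1 + fps_X ^ n :: 'a fps) ^ p = 1 ^ p + (fps_X ^ n) ^ p"
    using assms(1) by (intro freshmans_dream) simp_all
  then show ?thesis
    by (simp add: Ej_def power_mult)
qed

lemma fps_cutoff_Ej_power:
  assumes "1 \<le> n"
  shows "fps_cutoff (n + 1) ((Ej n :: 'a::field fps) ^ c) = fps_cutoff (n + 1) (1 + fps_const (of_nat c) * fps_X ^ n)"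
proof (induction c)
  case (Suc c)
  have "Ej n * (1 + fps_const (of_nat c) * fps_X ^ n) =
        (1 + fps_const (of_nat (Suc c)) * fps_X ^ n) + fps_X ^ (n + n) * (fps_const (of_nat c) :: 'a fps)"
    by (simp add: Ej_def algebra_simps power_add fps_const_add [symmetric])
  then have "fps_cutoff (n + 1) (Ej n * (1 + fps_const (of_nat c) * fps_X ^ n)) =
             fps_cutoff (n + 1) (1 + fps_const (of_nat (Suc c)) * fps_X ^ n :: 'a fps)"
    using assms by (simp only: fps_cutoff_add_X_power_mult)
  then show ?case
    using fps_cutoff_mult_cong[OF refl Suc.IH, of "Ej n"] by simp
qed simp

lemma fps_cutoff_mult_Ej_power:
  assumes "1 \<le> n"
  shows "fps_cutoff (n + 1) (g * (Ej n :: 'a::field fps) ^ c) =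
    fps_cutoff (n + 1) (g + fps_X ^ n * (fps_const (of_nat c) * g))"
  using fps_cutoff_mult_cong[OF refl fps_cutoff_Ej_power[OF assms], of g c]
  by (simp add: algebra_simps)

lemma U1_fps_cutoff_eq_prod_Ej_powers:
  assumes "prime p" "CARD('a::{field,finite}) = p" "f \<in> U1"
  shows "\<exists>a. fps_cutoff n f = fps_cutoff n (\<Prod>j\<in>{1..<n}. (Ej j :: 'a fps) ^ a j)"
proof (induction n)
  case (Suc n)
  then obtain a where a: "fps_cutoff n f = fps_cutoff n (\<Prod>j\<in>{1..<n}. Ej j ^ a j)"
    by blast
  define g where "g = (\<Prod>j\<in>{1..<n}. (Ej j :: 'a fps) ^ a j)"
  have "g \<in> U1"
    unfolding g_def by (intro U1_prod U1_power Ej_in_U1) simp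
  then have g0: "g $ 0 = 1"
    by (simp add: U1_iff)
  show ?case
  proof (cases "n = 0")
    case True
    then show ?thesis
      using assms(3) by (simp add: fps_cutoff_eq_fps_cutoff_iff U1_iff)
  next
    case False
    obtain c where c: "of_nat c = f $ n - g $ n"
      using range_of_nat_prime_card[OF assms(1,2)] by (metis UNIV_I imageE)
    have "fps_cutoff (n + 1) f = fps_cutoff (n + 1) (g + fps_X ^ n * (fps_const (of_nat c) * g))"
      using a c g0 by (auto simp: fps_cutoff_eq_fps_cutoff_iff fps_X_power_mult_nth g_def less_Suc_eq)
    also have "\<dots> = fps_cutoff (n + 1) (g * Ej n ^ c)"
      using fps_cutoff_mult_Ej_power[of n g c] False by auto
    also have "g = (\<Prod>j\<in>{1..<n}. Ej j ^ (a(n := c)) j)"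
      unfolding g_def by (intro prod.cong) auto
    also have "\<dots> * Ej n ^ c = (\<Prod>j\<in>{1..<Suc n}. Ej j ^ (a(n := c)) j)"
      using False by (simp add: atLeastLessThanSuc mult.commute)
    finally show ?thesis
      by (metis Suc_eq_plus1)
  qed
qed simp

lemma character_locally_constant:
  assumes "is_character p \<chi>" "f \<in> U1"
  obtains n where "\<And>g. g \<in> U1 \<Longrightarrow> fps_cutoff n g = fps_cutoff n f \<Longrightarrow> \<chi> g = \<chi> f"
proof -
  have "continuous_on U1 \<chi>"
    using assms(1) by (simp add: is_character_def)
  then obtain A where A: "open A" "A \<inter> U1 = \<chi> -` {\<chi> f} \<inter> U1"
    unfolding continuous_on_open_invariant by (meson open_discrete)
  then have "f \<in> A"
    using assms(2) by blast
  then obtain n where "{g. fps_cutoff n g = fps_cutoff n f} \<subseteq> A"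
    using A(1) open_fps_iff by blast
  then show ?thesis
    using A(2) by (intro that) blast
qed

lemma U1_hom_Ej_eq_if_coprime_Ej_eq:
  fixes \<phi> \<psi> :: "'a::{field,finite} fps \<Rightarrow> int"
  assumes "prime p" "CARD('a::{field,finite}) = p" "U1_hom p \<phi>" "U1_hom p \<psi>"
    and coprime_eq: "\<forall>j\<ge>1. \<not> p dvd j \<longrightarrow> \<phi> (Ej j :: 'a fps) = \<psi> (Ej j)"
  shows "1 \<le> j \<Longrightarrow> \<phi> (Ej j :: 'a fps) = \<psi> (Ej j)"
proof (induction j rule: less_induct)
  case (less j)
  show ?case
  proof (cases "p dvd j")
    case True
    then obtain i where i: "j = i * p"
      by (metis dvdE mult.commute)
    then have "1 \<le> i" "i < j"
      using less.prems prime_gt_1_nat[OF assms(1)] by (auto intro: Suc_leI)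
    then have "\<phi> (Ej i) = \<psi> (Ej i)" and Ei: "(Ej i :: 'a fps) \<in> U1"
      using less.IH Ej_in_U1 by auto
    moreover have Ej: "Ej j = (Ej i :: 'a fps) ^ p"
      by (simp add: i Ej_power_prime_card[OF assms(1,2)])
    ultimately show ?thesis
      unfolding Ej U1_hom_power[OF assms(3) Ei] U1_hom_power[OF assms(4) Ei] by simp
  qed (use coprime_eq less.prems in blast)
qed

lemma character_eq_U1_hom_if_Ej_eq:
  fixes \<psi> \<phi> :: "'a::{field,finite} fps \<Rightarrow> int"
  assumes "prime p" "CARD('a) = p" "is_character p \<psi>" "U1_hom p \<phi>"
    and "\<forall>h\<in>Uj n. \<phi> h = 0"
    and "\<forall>j\<ge>1. \<not> p dvd j \<longrightarrow> \<psi> (Ej j) = \<phi> (Ej j)"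
    and "f \<in> U1"
  shows "\<psi> f = \<phi> f"
proof -
  have hom: "U1_hom p \<psi>"
    using assms(3) by (rule is_character_imp_U1_hom)
  obtain n0 where n0: "\<And>g. g \<in> U1 \<Longrightarrow> fps_cutoff n0 g = fps_cutoff n0 f \<Longrightarrow> \<psi> g = \<psi> f"
    using character_locally_constant[OF assms(3,7)] by blast
  define N where "N = max n0 n"
  obtain a where a: "fps_cutoff N f = fps_cutoff N (\<Prod>j\<in>{1..<N}. (Ej j :: 'a fps) ^ a j)"
    using U1_fps_cutoff_eq_prod_Ej_powers[OF assms(1,2,7)] by blast
  define g where "g = (\<Prod>j\<in>{1..<N}. (Ej j :: 'a fps) ^ a j)"
  have factors: "\<And>j. j \<in> {1..<N} \<Longrightarrow> (Ej j :: 'a fps) ^ a j \<in> U1"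
    by (intro U1_power Ej_in_U1) simp
  then have "g \<in> U1"
    unfolding g_def by (rule U1_prod)
  have "\<psi> f = \<psi> g"
    using n0[OF \<open>g \<in> U1\<close>] fps_cutoff_eq_mono[OF a] by (simp add: g_def N_def)
  also have "\<psi> g = \<phi> g"
  proof -
    have "\<psi> (Ej j ^ a j) = \<phi> (Ej j ^ a j)" if "j \<in> {1..<N}" for j
      using that U1_hom_Ej_eq_if_coprime_Ej_eq[OF assms(1,2) hom assms(4,6)]
      by (simp add: U1_hom_power[OF hom Ej_in_U1] U1_hom_power[OF assms(4) Ej_in_U1])
    then show ?thesis
      using U1_hom_prod[OF hom finite_atLeastLessThan factors]
        U1_hom_prod[OF assms(4) finite_atLeastLessThan factors]
      by (simp add: g_def)
  qed
  also have "\<phi> g = \<phi> f"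
    using U1_hom_eq_if_fps_cutoff_eq[OF assms(4,5) \<open>g \<in> U1\<close> assms(7)] fps_cutoff_eq_mono[OF a]
    by (simp add: g_def N_def)
  finally show ?thesis .
qed

lemma strictly_equivalent_if_Ej_compose_eq:
  fixes \<chi> \<psi> :: "'a::{field,finite} fps \<Rightarrow> int"
  assumes "prime p" "CARD('a) = p" "is_character p \<chi>" "\<forall>h\<in>Uj n. \<chi> h = 0"
    and "is_character p \<psi>" "w \<in> U1" "\<chi> w = 0"
    and "\<forall>j\<ge>1. \<not> p dvd j \<longrightarrow> \<psi> (Ej j) = \<chi> (Ej j oo (fps_X * w))"
  shows "strictly_equivalent \<chi> \<psi>"
  unfolding strictly_equivalent_def
proof (intro bexI conjI ballI)
  show "fps_X * w \<in> nottingham"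
    using assms(6) by (simp add: nottingham_def U1_iff)
  show "\<chi> (fps_shift 1 (fps_X * w)) = 0"
    using assms(7) fps_shift_times_fps_X'[of w] by (simp only: mult.commute)
  have "U1_hom p (\<lambda>f. \<chi> (f oo (fps_X * w)))"
    using U1_hom_compose[OF is_character_imp_U1_hom[OF assms(3)]] by simp
  moreover have "\<forall>h\<in>Uj n. \<chi> (h oo (fps_X * w)) = 0"
    using assms(4) fps_compose_in_Uj by blast
  ultimately show "\<psi> f = nott_act (fps_X * w) \<chi> f" if "f \<in> U1" for f
    unfolding nott_act_def
    using character_eq_U1_hom_if_Ej_eq[OF assms(1,2,5)] assms(8) that by blast
qed

lemma Ej_compose_X_mult: "Ej i oo (fps_X * v) = 1 + fps_X ^ i * (v :: 'a::field fps) ^ i"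
proof -
  have "fps_X ^ i oo (fps_X * v) = (fps_X * v) ^ i"
    by (simp add: fps_compose_power[symmetric])
  then show ?thesis
    by (simp add: Ej_def fps_compose_add_distrib power_mult_distrib)
qed

lemma X_mult_compose_X_mult:
  fixes v w :: "'a::field fps"
  shows "(fps_X * v) oo (fps_X * w) = fps_X * (w * (v oo (fps_X * w)))"
  by (simp add: fps_compose_mult_distrib mult.assoc)

lemma fps_cutoff_Ej_compose_X_mult:
  assumes "v \<in> Uj k"
  shows "fps_cutoff (k + i) (Ej i oo (fps_X * v)) = fps_cutoff (k + i) (Ej i)"
proof -
  have "fps_cutoff k (v ^ i) = fps_cutoff k 1"
    using Uj_power[OF assms] by (simp add: Uj_iff_fps_cutoff)
  then have "fps_cutoff (k + i) (fps_X ^ i * v ^ i) = fps_cutoff (k + i) (fps_X ^ i * 1)"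
    by (rule fps_cutoff_X_power_mult_cong)
  then show ?thesis
    unfolding Ej_compose_X_mult by (simp add: Ej_def fps_cutoff_add)
qed

lemma fps_cutoff_Ej_compose_Ej_powers:
  assumes "1 \<le> j" "1 \<le> k" "j + k = m"
  shows "fps_cutoff (m + 1) (Ej j oo (fps_X * (Ej k ^ c * Ej m ^ c'))) =
    fps_cutoff (m + 1) ((Ej j :: 'a::field fps) * Ej m ^ (c * j))"
proof -
  define C where "C = fps_const (of_nat (c * j) :: 'a)"
  have "(Ej m :: 'a fps) ^ (c' * j) \<in> Uj m"
    using assms by (intro Uj_power Ej_in_Uj) simp
  then have "fps_cutoff m ((Ej m :: 'a fps) ^ (c' * j)) = fps_cutoff m 1"
    by (simp add: Uj_iff_fps_cutoff)
  then have "fps_cutoff (k + 1) ((Ej m :: 'a fps) ^ (c' * j)) = fps_cutoff (k + 1) 1"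
    by (rule fps_cutoff_eq_mono) (use assms in simp)
  then have "fps_cutoff (k + 1) (Ej k ^ (c * j) * Ej m ^ (c' * j)) = fps_cutoff (k + 1) ((1 + C * fps_X ^ k) * 1)"
    unfolding C_def by (intro fps_cutoff_mult_cong fps_cutoff_Ej_power assms(2))
  then have "fps_cutoff (k + 1) ((Ej k ^ c * Ej m ^ c') ^ j) = fps_cutoff (k + 1) (1 + C * fps_X ^ k)"
    by (simp add: power_mult_distrib power_mult)
  then have "fps_cutoff (m + 1) (fps_X ^ j * (Ej k ^ c * Ej m ^ c') ^ j) =
      fps_cutoff (m + 1) (fps_X ^ j * (1 + C * fps_X ^ k))"
    using fps_cutoff_X_power_mult_cong[of "k + 1", where j = j] assms(3) by (simp add: add.commute)
  then have "fps_cutoff (m + 1) (Ej j oo (fps_X * (Ej k ^ c * Ej m ^ c'))) =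
      fps_cutoff (m + 1) (1 + fps_X ^ j * (1 + C * fps_X ^ k))"
    by (simp add: Ej_compose_X_mult fps_cutoff_add)
  also have "1 + fps_X ^ j * (1 + C * fps_X ^ k) = Ej j * (1 + C * fps_X ^ m) - fps_X ^ (j + m) * C"
    using assms(3) by (simp add: Ej_def algebra_simps power_add [symmetric])
  also have "fps_cutoff (m + 1) \<dots> = fps_cutoff (m + 1) (Ej j * (1 + C * fps_X ^ m))"
    using fps_cutoff_add_X_power_mult[of "m + 1" "j + m" _ "- C"] assms(1) by simp
  also have "\<dots> = fps_cutoff (m + 1) (Ej j * Ej m ^ (c * j))"
    unfolding C_def using assms by (intro fps_cutoff_mult_cong refl fps_cutoff_Ej_power[symmetric]) simp
  finally show ?thesis .
qed

lemma U1_hom_Ej_compose_Ej_powers: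
  fixes \<phi> :: "'a::field fps \<Rightarrow> int"
  assumes "U1_hom p \<phi>" "\<forall>h\<in>Uj (m + 1). \<phi> h = 0" "1 \<le> j" "1 \<le> k" "j + k = m"
  shows "\<phi> (Ej j oo (fps_X * (Ej k ^ c * Ej m ^ c'))) = (\<phi> (Ej j) + int (c * j) * \<phi> (Ej m)) mod int p ^ 2"
proof -
  have U: "(Ej j :: 'a fps) \<in> U1" "(Ej m :: 'a fps) \<in> U1"
    using assms(3-5) by (simp_all add: Ej_in_U1)
  have "\<phi> (Ej j oo (fps_X * (Ej k ^ c * Ej m ^ c'))) = \<phi> (Ej j * Ej m ^ (c * j))"
    by (rule U1_hom_eq_if_fps_cutoff_eq[OF assms(1,2) fps_compose_in_U1[OF U(1)]
          U1_mult[OF U(1) U1_power[OF U(2)]] fps_cutoff_Ej_compose_Ej_powers[OF assms(3-5)]])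
  also have "\<dots> = (\<phi> (Ej j) + int (c * j) * \<phi> (Ej m) mod int p ^ 2) mod int p ^ 2"
    by (simp add: U1_hom_mult[OF assms(1) U(1) U1_power[OF U(2)]] U1_hom_power[OF assms(1) U(2)])
  finally show ?thesis
    by (simp add: mod_add_right_eq)
qed

lemma exists_nat_cong_solution:
  fixes a r n :: int
  assumes "coprime a n" "0 < n"
  obtains c :: nat where "[a * int c = r] (mod n)"
proof -
  obtain x where x: "[a * x = r] (mod n)"
    using assms(1) cong_solve_dvd_int[of a n r] by auto
  have "[a * int (nat (x mod n)) = a * x] (mod n)"
    using assms(2) by (simp add: cong_def mod_mult_right_eq)
  then show ?thesis
    using x that cong_trans by blast
qed

lemma mod_square_add_mult_cong:
  fixes a x y q :: int
  assumes "[x = y] (mod q)"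
  shows "(a + q * x) mod q ^ 2 = (a + q * y) mod q ^ 2"
proof -
  obtain k where "x = y + q * k"
    using assms by (metis cong_iff_dvd_diff cong_sym dvdE diff_eq_eq add.commute)
  then have "a + q * x = (a + q * y) + q ^ 2 * k"
    by (simp add: algebra_simps power2_eq_square)
  then show ?thesis
    by (simp only: mod_mult_self2)
qed

lemma coprime_int_prime_if_not_dvd:
  assumes "prime p" "\<not> int p dvd a"
  shows "coprime a (int p)"
  using assms prime_imp_coprime[of "int p" a] by (simp add: coprime_commute)

lemma normalization_step:
  fixes \<phi> :: "'a::{field,finite} fps \<Rightarrow> int"
  assumes "prime p" "CARD('a) = p" "U1_hom p \<phi>"
    and kill: "\<forall>h\<in>Uj (m + 1). \<phi> h = 0" and pdiv: "\<forall>h\<in>Uj (l + 1). int p dvd \<phi> h"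
    and "\<phi> (Ej m) \<noteq> 0" and J: "1 \<le> J" "l + J < m" "\<not> p dvd J"
    and t: "[t = \<phi> (Ej J)] (mod int p)" "t \<in> {0..<int p ^ 2}"
  obtains v where "v \<in> Uj (m - J)" "\<phi> v = 0" "\<phi> (Ej J oo (fps_X * v)) = t"
proof -
  define k where "k = m - J"
  have k: "1 \<le> k" "l + 1 \<le> k" "J + k = m" "1 \<le> m"
    using J by (auto simp: k_def)
  have Ej_l: "(Ej i :: 'a fps) \<in> Uj (l + 1)" if "k \<le> i" for i
    using Ej_in_Uj[of i] Uj_antimono[of "l + 1" i] that k by auto
  obtain \<mu> where \<mu>: "\<phi> (Ej m) = int p * \<mu>"
    using pdiv Ej_l[of m] k by (auto elim: dvdE)
  have "0 < \<mu>" "\<mu> < int p"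
    using U1_hom_range[OF assms(3) Ej_in_U1[OF k(4)]] \<open>\<phi> (Ej m) \<noteq> 0\<close>
    by (auto simp: \<mu> zero_le_mult_iff power2_eq_square)
  then have "coprime \<mu> (int p)"
    using coprime_int_prime_if_not_dvd[OF assms(1)] zdvd_not_zless by blast
  moreover have "coprime (int J) (int p)"
    using coprime_int_prime_if_not_dvd[OF assms(1), of "int J"] J(3) by simp
  ultimately have cop: "coprime (int J * \<mu>) (int p)"
    by simp
  obtain e where e: "\<phi> (Ej k) = int p * e"
    using pdiv Ej_l[of k] by (auto elim: dvdE)
  obtain r where r: "t = \<phi> (Ej J) + int p * r"
    using t(1) by (metis cong_iff_dvd_diff dvdE diff_eq_eq add.commute)
  obtain c :: nat where c: "[int J * \<mu> * int c = r] (mod int p)"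
    using exists_nat_cong_solution[OF cop] prime_gt_0_nat[OF assms(1)] by auto
  obtain c' :: nat where c': "[\<mu> * int c' = - (int c * e)] (mod int p)"
    using exists_nat_cong_solution[of \<mu> "int p"] cop prime_gt_0_nat[OF assms(1)] by auto
  define v :: "'a fps" where "v = Ej k ^ c * Ej m ^ c'"
  have U: "(Ej k :: 'a fps) \<in> U1" "(Ej m :: 'a fps) \<in> U1"
    using k(1,4) by (simp_all add: Ej_in_U1)
  show ?thesis
  proof (rule that)
    have "(Ej m :: 'a fps) \<in> Uj k"
      using Ej_in_Uj[OF k(4)] Uj_antimono[of k m] k(3) by auto
    then show "v \<in> Uj (m - J)"
      unfolding v_def k_def[symmetric] by (intro Uj_mult Uj_power Ej_in_Uj k(1))
    have "[int c * e + \<mu> * int c' = 0] (mod int p)"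
      using c' by (simp add: cong_iff_dvd_diff algebra_simps)
    then have "(0 + int p * (int c * e + \<mu> * int c')) mod int p ^ 2 = (0 + int p * 0) mod int p ^ 2"
      by (rule mod_square_add_mult_cong)
    then show "\<phi> v = 0"
      unfolding v_def U1_hom_mult[OF assms(3) U1_power[OF U(1)] U1_power[OF U(2)]]
        U1_hom_power[OF assms(3) U(1)] U1_hom_power[OF assms(3) U(2)] e \<mu>
      by (simp add: mod_add_eq algebra_simps)
    have "\<phi> (Ej J oo (fps_X * v)) = (\<phi> (Ej J) + int p * (int J * \<mu> * int c)) mod int p ^ 2"
      unfolding v_def U1_hom_Ej_compose_Ej_powers[OF assms(3) kill J(1) k(1,3)] \<mu>
      by (simp add: algebra_simps)
    also have "\<dots> = (\<phi> (Ej J) + int p * r) mod int p ^ 2"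
      using c by (rule mod_square_add_mult_cong)
    also have "\<dots> = t"
      using r t(2) by simp
    finally show "\<phi> (Ej J oo (fps_X * v)) = t" .
  qed
qed

lemma fps_compose_X_mult_substitution:
  fixes f v w :: "'a::field fps"
  shows "f oo (fps_X * (w * (v oo (fps_X * w)))) = (f oo (fps_X * v)) oo (fps_X * w)"
  by (simp add: X_mult_compose_X_mult[symmetric] fps_compose_assoc)

lemma U1_hom_Ej_compose_X_mult_cong:
  assumes "U1_hom p \<phi>" "\<forall>h\<in>Uj n. d dvd \<phi> h" "d dvd int p ^ 2"
    and "v \<in> Uj k" "1 \<le> i" "n \<le> k + i"
  shows "[\<phi> (Ej i oo (fps_X * v)) = \<phi> (Ej i)] (mod d)"
proof -
  have "fps_cutoff n (Ej i oo (fps_X * v)) = fps_cutoff n (Ej i)"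
    by (rule fps_cutoff_eq_mono[OF fps_cutoff_Ej_compose_X_mult[OF assms(4)] assms(6)])
  then show ?thesis
    using assms(5) by (intro U1_hom_cong_if_fps_cutoff_eq[OF assms(1-3)] fps_compose_in_U1 Ej_in_U1)
qed

lemma U1_hom_Ej_compose_X_mult_eq:
  assumes "U1_hom p \<phi>" "\<forall>h\<in>Uj n. \<phi> h = 0"
    and "v \<in> Uj k" "1 \<le> i" "n \<le> k + i"
  shows "\<phi> (Ej i oo (fps_X * v)) = \<phi> (Ej i)"
proof -
  have "fps_cutoff n (Ej i oo (fps_X * v)) = fps_cutoff n (Ej i)"
    by (rule fps_cutoff_eq_mono[OF fps_cutoff_Ej_compose_X_mult[OF assms(3)] assms(5)])
  then show ?thesis
    using assms(4) by (intro U1_hom_eq_if_fps_cutoff_eq[OF assms(1,2)] fps_compose_in_U1 Ej_in_U1)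
qed

lemma U1_hom_Ej_neq_0:
  fixes \<phi> :: "'a::{field,finite} fps \<Rightarrow> int"
  assumes "prime p" "CARD('a) = p" "U1_hom p \<phi>" "\<forall>h\<in>Uj (m + 1). \<phi> h = 0"
    and "f \<in> Uj m" "\<phi> f \<noteq> 0" "1 \<le> m"
  shows "\<phi> (Ej m) \<noteq> 0"
proof
  assume Em: "\<phi> (Ej m) = 0"
  obtain c where c: "of_nat c = f $ m"
    using range_of_nat_prime_card[OF assms(1,2)] by (metis UNIV_I imageE)
  have "fps_cutoff (m + 1) f = fps_cutoff (m + 1) (1 + fps_const (of_nat c) * fps_X ^ m)"
    using assms(5,7) c by (auto simp: Uj_def fps_cutoff_eq_fps_cutoff_iff less_Suc_eq)
  also have "\<dots> = fps_cutoff (m + 1) (Ej m ^ c)"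
    by (rule fps_cutoff_Ej_power[OF assms(7), symmetric])
  finally have "\<phi> f = \<phi> (Ej m ^ c)"
    using U1_hom_eq_if_fps_cutoff_eq[OF assms(3,4)] subsetD[OF Uj_subset_U1 assms(5)]
      U1_power[OF Ej_in_U1[OF assms(7)]] by blast
  with Em show False
    using assms(6) U1_hom_power[OF assms(3) Ej_in_U1[OF assms(7)]] by simp
qed

text \<open>
  The substitution \<open>t \<mapsto> t w\<close> is strict, preserves all values \<open>\<chi>(E\<^sub>i)\<close> modulo \<open>p\<close>, and
  already turns them into the target values \<open>T i\<close> for \<open>i \<ge> J\<close>.
\<close>

definition normalizes_from :: "nat \<Rightarrow> ('a::field fps \<Rightarrow> int) \<Rightarrow> (nat \<Rightarrow> int) \<Rightarrow> nat \<Rightarrow> 'a fps \<Rightarrow> bool" where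
  "normalizes_from p \<chi> T J w \<longleftrightarrow> w \<in> U1 \<and> \<chi> w = 0 \<and>
     (\<forall>i\<ge>1. \<not> p dvd i \<longrightarrow> [\<chi> (Ej i oo (fps_X * w)) = \<chi> (Ej i)] (mod int p)) \<and>
     (\<forall>i\<ge>max 1 J. \<not> p dvd i \<longrightarrow> \<chi> (Ej i oo (fps_X * w)) = T i)"

lemma normalizes_from_Suc_imp_coprime:
  fixes \<chi> :: "'a::{field,finite} fps \<Rightarrow> int"
  assumes "prime p" "CARD('a) = p" "U1_hom p \<chi>"
    and kill: "\<forall>h\<in>Uj (m + 1). \<chi> h = 0" and pdiv: "\<forall>h\<in>Uj (l + 1). int p dvd \<chi> h"
    and "\<chi> (Ej m) \<noteq> 0" "1 \<le> m"
    and T: "\<forall>i\<ge>1. \<not> p dvd i \<longrightarrow> [T i = \<chi> (Ej i)] (mod int p) \<and> T i \<in> {0..<int p ^ 2}"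
    and J: "1 \<le> J" "l + J < m" "\<not> p dvd J" and w: "normalizes_from p \<chi> T (Suc J) w"
  obtains w' where "normalizes_from p \<chi> T J w'"
proof -
  define \<phi> where "\<phi> = (\<lambda>f. \<chi> (f oo (fps_X * w)))"
  have wU: "w \<in> U1" "\<chi> w = 0"
    using w by (simp_all add: normalizes_from_def)
  have \<phi>: "U1_hom p \<phi>" "\<forall>h\<in>Uj (m + 1). \<phi> h = 0" "\<forall>h\<in>Uj (l + 1). int p dvd \<phi> h"
    unfolding \<phi>_def using U1_hom_compose[OF assms(3)] kill pdiv fps_compose_in_Uj by simp_all blast+
  have "\<phi> (Ej m) = \<chi> (Ej m)"
    using U1_hom_Ej_compose_X_mult_eq[OF assms(3) kill] wU(1) assms(7) by (simp add: \<phi>_def U1_eq_Uj_1)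
  moreover have "[T J = \<chi> (Ej J)] (mod int p)" "T J \<in> {0..<int p ^ 2}"
    "[\<chi> (Ej J) = \<phi> (Ej J)] (mod int p)"
    using T w J by (auto simp: normalizes_from_def \<phi>_def cong_sym)
  ultimately obtain v where v: "v \<in> Uj (m - J)" "\<phi> v = 0" "\<phi> (Ej J oo (fps_X * v)) = T J"
    using normalization_step[OF assms(1,2) \<phi> _ J] assms(6) cong_trans by metis
  define w' where "w' = w * (v oo (fps_X * w))"
  have substitute: "\<chi> (Ej i oo (fps_X * w')) = \<phi> (Ej i oo (fps_X * v))" for i
    by (simp add: w'_def \<phi>_def fps_compose_X_mult_substitution)
  have "normalizes_from p \<chi> T J w'"
    unfolding normalizes_from_def
  proof (intro conjI allI impI)
    show "w' \<in> U1" "\<chi> w' = 0"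
      using wU v(2) U1_hom_mult[OF assms(3) wU(1) fps_compose_in_U1] subsetD[OF Uj_subset_U1 v(1)]
      by (simp_all add: w'_def U1_mult fps_compose_in_U1 \<phi>_def)
  next
    fix i :: nat assume i: "1 \<le> i" "\<not> p dvd i"
    have "[\<phi> (Ej i oo (fps_X * v)) = \<phi> (Ej i)] (mod int p)"
      using U1_hom_Ej_compose_X_mult_cong[OF \<phi>(1,3) _ v(1) i(1)] J(2) by simp
    then show "[\<chi> (Ej i oo (fps_X * w')) = \<chi> (Ej i)] (mod int p)"
      using w i unfolding substitute normalizes_from_def \<phi>_def by (blast intro: cong_trans)
  next
    fix i :: nat assume i: "max 1 J \<le> i" "\<not> p dvd i"
    show "\<chi> (Ej i oo (fps_X * w')) = T i"
    proof (cases "i = J")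
      case False
      then have "\<phi> (Ej i oo (fps_X * v)) = \<phi> (Ej i)"
        using i J(2) by (intro U1_hom_Ej_compose_X_mult_eq[OF \<phi>(1,2) v(1)]) auto
      then show ?thesis
        using w i False unfolding substitute normalizes_from_def \<phi>_def by auto
    qed (use v(3) substitute in simp)
  qed
  then show ?thesis
    by (rule that)
qed

lemma normalizes_from_Suc_imp:
  fixes \<chi> :: "'a::{field,finite} fps \<Rightarrow> int"
  assumes "prime p" "CARD('a) = p" "U1_hom p \<chi>"
    and "\<forall>h\<in>Uj (m + 1). \<chi> h = 0" "\<forall>h\<in>Uj (l + 1). int p dvd \<chi> h"
    and "\<chi> (Ej m) \<noteq> 0" "1 \<le> m"
    and "\<forall>i\<ge>1. \<not> p dvd i \<longrightarrow> [T i = \<chi> (Ej i)] (mod int p) \<and> T i \<in> {0..<int p ^ 2}"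
    and "l + J < m" and w: "normalizes_from p \<chi> T (Suc J) w"
  obtains w' where "normalizes_from p \<chi> T J w'"
proof (cases "J = 0 \<or> p dvd J")
  case True
  then have "max 1 J \<le> i \<Longrightarrow> \<not> p dvd i \<Longrightarrow> max 1 (Suc J) \<le> i" for i
    by (cases "i = J") auto
  then show ?thesis
    using w that unfolding normalizes_from_def by blast
next
  case False
  then show ?thesis
    using normalizes_from_Suc_imp_coprime[OF assms(1-8) _ assms(9) _ w] that by auto
qed

lemma exists_normalizing_substitution:
  fixes \<chi> :: "'a::{field,finite} fps \<Rightarrow> int"
  assumes "prime p" "CARD('a) = p" "U1_hom p \<chi>"
    and "\<forall>h\<in>Uj (m + 1). \<chi> h = 0" "\<forall>h\<in>Uj (l + 1). int p dvd \<chi> h"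
    and "\<chi> (Ej m) \<noteq> 0" "1 \<le> m"
    and T: "\<forall>i\<ge>1. \<not> p dvd i \<longrightarrow> [T i = \<chi> (Ej i)] (mod int p) \<and> T i \<in> {0..<int p ^ 2}"
    and T_high: "\<forall>i\<ge>1. \<not> p dvd i \<longrightarrow> m - l \<le> i \<longrightarrow> T i = \<chi> (Ej i)"
  obtains w where "w \<in> U1" "\<chi> w = 0" "\<forall>i\<ge>1. \<not> p dvd i \<longrightarrow> \<chi> (Ej i oo (fps_X * w)) = T i"
proof -
  have "\<exists>w. normalizes_from p \<chi> T J w" if "J \<le> m - l" for J
    using that
  proof (induction J rule: inc_induct)
    case base
    have "(1::'a fps) \<in> U1" "Ej i oo (fps_X * 1) = Ej i" for i
      by (simp_all add: U1_iff Ej_compose_X_mult Ej_def)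
    then show ?case
      using T_high U1_hom_one[OF assms(3)] by (auto simp: normalizes_from_def)
  next
    case (step J)
    then show ?case
      using normalizes_from_Suc_imp[OF assms(1-7) T] by (metis less_diff_conv add.commute)
  qed
  then obtain w where "normalizes_from p \<chi> T 0 w"
    by blast
  then show ?thesis
    using that unfolding normalizes_from_def by auto
qed

lemma has_type_Ej_neq_0:
  fixes \<chi> :: "'a::{field,finite} fps \<Rightarrow> int"
  assumes "prime p" "CARD('a) = p" "has_type p \<chi> l m"
  shows "1 \<le> m" "\<chi> (Ej m) \<noteq> 0"
proof -
  obtain f where f: "f \<in> Uj m" "\<chi> f \<noteq> 0" and kill: "\<forall>h\<in>Uj (m + 1). \<chi> h = 0"
    using assms(3) by (auto simp: has_type_def)
  show "1 \<le> m"
  proof (rule ccontr)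
    assume "\<not> 1 \<le> m"
    then have "(Uj m :: 'a fps set) = Uj (m + 1)"
      by (auto simp: Uj_def)
    then show False
      using f kill by simp
  qed
  then show "\<chi> (Ej m) \<noteq> 0"
    using U1_hom_Ej_neq_0[OF assms(1,2) _ kill f] assms(3)
    by (simp add: has_type_def is_character_imp_U1_hom)
qed

theorem proposition4p2:
  fixes chi psi :: "'a::{field,finite} fps \<Rightarrow> int"
    and p l m :: nat and x :: int and b :: "nat \<Rightarrow> int"
  assumes "prime p" and "CARD('a) = p"
    and "has_type p chi l m"
    and "x \<in> {0..<int p}" and "\<forall>j. b j \<in> {0..<int p}"
    and "\<forall>i\<ge>1. \<not> p dvd i \<longrightarrow>
           chi (Ej i) = ((if i = l then x else 0)
                       + (if i \<le> m then b i * int p else 0)) mod (int p ^ 2)"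
    and "is_character p psi"
    and "\<forall>i\<ge>1. \<not> p dvd i \<longrightarrow>
           psi (Ej i) = ((if i = l then x else 0)
                       + (if m - l \<le> i \<and> i \<le> m then b i * int p else 0)) mod (int p ^ 2)"
  shows "strictly_equivalent chi psi"
proof -
  have chi: "is_character p chi" "\<forall>h\<in>Uj (m + 1). chi h = 0" "\<forall>h\<in>Uj (l + 1). int p dvd chi h"
    using assms(3) by (auto simp: has_type_def)
  have "\<forall>i\<ge>1. \<not> p dvd i \<longrightarrow> [psi (Ej i) = chi (Ej i)] (mod int p) \<and> psi (Ej i) \<in> {0..<int p ^ 2}"
  proof (intro allI impI conjI)
    fix i :: nat assume "1 \<le> i" "\<not> p dvd i"
    have "[(a + (if P then B * int p else 0)) mod int p ^ 2 = a] (mod int p)" for a B P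
      by (simp add: cong_def mod_mod_cancel)
    then show "[psi (Ej i) = chi (Ej i)] (mod int p)"
      using assms(6,8) \<open>1 \<le> i\<close> \<open>\<not> p dvd i\<close> by (metis (no_types, lifting) cong_sym cong_trans)
    show "psi (Ej i) \<in> {0..<int p ^ 2}"
      using assms(1,8) \<open>1 \<le> i\<close> \<open>\<not> p dvd i\<close> prime_gt_0_nat by simp
  qed
  moreover have "\<forall>i\<ge>1. \<not> p dvd i \<longrightarrow> m - l \<le> i \<longrightarrow> psi (Ej i) = chi (Ej i)"
    using assms(6,8) by simp
  ultimately obtain w where "w \<in> U1" "chi w = 0" "\<forall>i\<ge>1. \<not> p dvd i \<longrightarrow> chi (Ej i oo (fps_X * w)) = psi (Ej i)"
    using exists_normalizing_substitution[OF assms(1,2) is_character_imp_U1_hom, of chi m l "\<lambda>i. psi (Ej i)"]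
      chi has_type_Ej_neq_0[OF assms(1-3)] by blast
  then show ?thesis
    using strictly_equivalent_if_Ej_compose_eq[OF assms(1,2) chi(1,2) assms(7)] by simp
qed

end
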